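(* Let $p\in\mathcal{X}$ be a pathless polynomial with $p\in\mathcal{J}$. Then $D(p)=0$.
   Context: Let $\mathbf{k}$ be a commutative ring, let $\beta,\alpha\in\mathbf{k}$, and let $n$ be a positive integer. Let $\mathcal{X}=\mathbf{k}[x_{i,j}\mid 1\le i<j\le n]$ be the polynomial ring over $\mathbf{k}$ in the indeterminates $x_{i,j}$. Let $\mathcal{J}$ be the ideal of $\mathcal{X}$ generated by all elements $x_{i,j}x_{j,k}-x_{i,k}(x_{i,j}+x_{j,k}+\beta)-\alpha$ for $1\le i<j<k\le n$. A monomial in the $x_{i,j}$ is pathless if there is no triple $1\le i<j<k\le n$ with $x_{i,j}x_{j,k}$ dividing it; a polynomial is pathless if it is a $\mathbf{k}$-linear combination of pathless monomials. Let $\mathcal{T}'=\mathbf{k}[t_1,\dots,t_{n-1}]$ and let $D:\mathcal{X}\to\mathcal{T}'$ be the $\mathbf{k}$-algebra homomorphism with $D(x_{i,j})=t_i$. *)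

theory Defs
  imports "HOL-Library.Poly_Mapping"
begin

text \<open>Variables of the ring X are indexed by
pairs (i,j) (standing for x_{i,j}); variables of T' by naturals i (standing for t_i).\<close>

type_synonym 'a xpoly = "((nat \<times> nat) \<Rightarrow>\<^sub>0 nat) \<Rightarrow>\<^sub>0 'a"
type_synonym 'a tpoly = "(nat \<Rightarrow>\<^sub>0 nat) \<Rightarrow>\<^sub>0 'a"

definition xvar :: "nat \<Rightarrow> nat \<Rightarrow> 'a::comm_ring_1 xpoly" where
  "xvar i j = Poly_Mapping.single (Poly_Mapping.single (i, j) 1) 1"

definition tvar :: "nat \<Rightarrow> 'a::comm_ring_1 tpoly" where
  "tvar i = Poly_Mapping.single (Poly_Mapping.single i 1) 1"

definition xconst :: "'a::comm_ring_1 \<Rightarrow> 'a xpoly" where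
  "xconst c = Poly_Mapping.single 0 c"

definition tconst :: "'a::comm_ring_1 \<Rightarrow> 'a tpoly" where
  "tconst c = Poly_Mapping.single 0 c"

definition Xring :: "nat \<Rightarrow> 'a::comm_ring_1 xpoly set" where
  "Xring n = {p. \<forall>m \<in> Poly_Mapping.keys p. \<forall>v \<in> Poly_Mapping.keys m. 1 \<le> fst v \<and> fst v < snd v \<and> snd v \<le> n}"

definition Jgen :: "'a::comm_ring_1 \<Rightarrow> 'a \<Rightarrow> nat \<Rightarrow> nat \<Rightarrow> nat \<Rightarrow> 'a xpoly" where
  "Jgen \<beta> \<alpha> i j k = xvar i j * xvar j k
      - xvar i k * (xvar i j + xvar j k + xconst \<beta>) - xconst \<alpha>"

inductive_set Jideal :: "nat \<Rightarrow> 'a::comm_ring_1 \<Rightarrow> 'a \<Rightarrow> 'a xpoly set"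
  for n :: nat and \<beta> \<alpha> :: 'a where
  gen: "1 \<le> i \<Longrightarrow> i < j \<Longrightarrow> j < k \<Longrightarrow> k \<le> n \<Longrightarrow> Jgen \<beta> \<alpha> i j k \<in> Jideal n \<beta> \<alpha>"
| zero: "0 \<in> Jideal n \<beta> \<alpha>"
| add: "p \<in> Jideal n \<beta> \<alpha> \<Longrightarrow> q \<in> Jideal n \<beta> \<alpha> \<Longrightarrow> p + q \<in> Jideal n \<beta> \<alpha>"
| mult: "q \<in> Xring n \<Longrightarrow> p \<in> Jideal n \<beta> \<alpha> \<Longrightarrow> q * p \<in> Jideal n \<beta> \<alpha>"

definition pathless_monomial :: "nat \<Rightarrow> ((nat \<times> nat) \<Rightarrow>\<^sub>0 nat) \<Rightarrow> bool" where
  "pathless_monomial n m \<longleftrightarrow>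
     \<not> (\<exists>i j k. 1 \<le> i \<and> i < j \<and> j < k \<and> k \<le> n \<and>
              Poly_Mapping.lookup m (i, j) \<ge> 1 \<and> Poly_Mapping.lookup m (j, k) \<ge> 1)"

definition pathless :: "nat \<Rightarrow> 'a::comm_ring_1 xpoly \<Rightarrow> bool" where
  "pathless n p \<longleftrightarrow> (\<forall>m \<in> Poly_Mapping.keys p. pathless_monomial n m)"

text \<open>The k-algebra homomorphism D : X -> T' with D(x_{i,j}) = t_i.\<close>
definition Dmap :: "'a::comm_ring_1 xpoly \<Rightarrow> 'a tpoly" where
  "Dmap p = (\<Sum>m \<in> Poly_Mapping.keys p. tconst (Poly_Mapping.lookup p m) *
                (\<Prod>v \<in> Poly_Mapping.keys m. tvar (fst v) ^ Poly_Mapping.lookup m v))"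

end

theory Submission
  imports Defs
begin

text \<open>We construct a \<open>k\<close>-linear map \<open>F : X \<rightarrow> T'\<close> that vanishes on \<open>J\<close> and agrees with \<open>D\<close> on
  pathless monomials; then \<open>D(p) = F(p) = 0\<close>.

  Let \<open>\<partial>\<^sub>a\<^sub>,\<^sub>b G = (G[t\<^sub>b := t\<^sub>a] - G) / (t\<^sub>a - t\<^sub>b)\<close> be the divided difference and
  \<open>A\<^sub>a\<^sub>,\<^sub>b G = t\<^sub>a G + f(t\<^sub>a) \<partial>\<^sub>a\<^sub>,\<^sub>b G\<close> with \<open>f(t) = t\<^sup>2 + \<beta> t + \<alpha>\<close>. The operators \<open>A\<^sub>a\<^sub>,\<^sub>b\<close> and
  \<open>A\<^sub>c\<^sub>,\<^sub>d\<close> commute whenever \<open>a \<noteq> d\<close> and \<open>c \<noteq> b\<close>, and for distinct \<open>i, j, k\<close> they satisfy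
  \<open>A\<^sub>i\<^sub>,\<^sub>j A\<^sub>j\<^sub>,\<^sub>k = A\<^sub>i\<^sub>,\<^sub>k A\<^sub>i\<^sub>,\<^sub>j + A\<^sub>i\<^sub>,\<^sub>k A\<^sub>j\<^sub>,\<^sub>k + \<beta> A\<^sub>i\<^sub>,\<^sub>k + \<alpha>\<close>, the operator form of the generators of \<open>J\<close>.
  On a monomial \<open>m\<close> put \<open>F(m) = B\<^sub>1 (B\<^sub>2 (\<dots> (B\<^sub>n 1)))\<close> with \<open>B\<^sub>l = \<Prod>\<^bsub>p > l\<^esub> A\<^sub>l\<^sub>,\<^sub>p\<^bsup>m(l,p)\<^esup>\<close>.
  Commuting \<open>A\<^sub>i\<^sub>,\<^sub>j\<close> and \<open>A\<^sub>i\<^sub>,\<^sub>k\<close> inward to \<open>B\<^sub>j\<close> and applying the relation there shows that \<open>F\<close> kills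
  every multiple of every generator. If \<open>m\<close> is pathless and \<open>m(l,p) > 0\<close>, then \<open>t\<^sub>p\<close> does not occur in
  \<open>B\<^sub>l\<^sub>+\<^sub>1 (\<dots> (B\<^sub>n 1))\<close>, where \<open>A\<^sub>l\<^sub>,\<^sub>p\<close> acts as multiplication by \<open>t\<^sub>l\<close>; hence \<open>F(m) = D(m)\<close>.\<close>

section \<open>Linear extension of a map on monomials\<close>

definition lin_ext :: "('k \<Rightarrow> 'a::comm_ring_1 tpoly) \<Rightarrow> ('k \<Rightarrow>\<^sub>0 'a) \<Rightarrow> 'a tpoly" where
  "lin_ext F p = (\<Sum>m\<in>Poly_Mapping.keys p. tconst (Poly_Mapping.lookup p m) * F m)"

lemma tconst_add: "tconst (a + b) = tconst a + tconst b"
  by (simp add: tconst_def single_add)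

lemma tconst_mult: "tconst (a * b) = tconst a * tconst b"
  by (simp add: tconst_def mult_single)

lemma tconst_0 [simp]: "tconst 0 = 0"
  by (simp add: tconst_def)

lemma tconst_1 [simp]: "tconst 1 = 1"
  by (simp add: tconst_def)

lemma lin_ext_0 [simp]: "lin_ext F 0 = 0"
  by (simp add: lin_ext_def)

lemma lin_ext_single [simp]: "lin_ext F (Poly_Mapping.single m c) = tconst c * F m"
  by (cases "c = 0") (simp_all add: lin_ext_def)

lemma lin_ext_add: "lin_ext F (p + q) = lin_ext F p + lin_ext F q"
  unfolding lin_ext_def
  by (rule setsum_keys_plus_distrib) (simp_all add: tconst_add distrib_right)

lemma lin_ext_diff: "lin_ext F (p - q) = lin_ext F p - lin_ext F q"
proof -
  have "lin_ext F (p - q) + lin_ext F q = lin_ext F p"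
    by (simp flip: lin_ext_add)
  then show ?thesis
    by (simp add: eq_diff_eq)
qed

lemma mult_lin_ext: "c * lin_ext F p = lin_ext (\<lambda>m. c * F m) p"
  by (simp add: lin_ext_def sum_distrib_left mult.left_commute)

lemma lin_ext_fun_diff: "lin_ext (\<lambda>m. F m - G m) p = lin_ext F p - lin_ext G p"
  by (simp add: lin_ext_def sum_subtractf right_diff_distrib)

lemma poly_mapping_single_induct [case_names zero single add]:
  fixes p :: "'k \<Rightarrow>\<^sub>0 'b::comm_monoid_add"
  assumes "P 0"
    and "\<And>m c. P (Poly_Mapping.single m c)"
    and "\<And>p q. P p \<Longrightarrow> P q \<Longrightarrow> P (p + q)"
  shows "P p"
proof (induction p rule: update_induct)
  case (update f a b)
  have "Poly_Mapping.update a b f = f + Poly_Mapping.single a b"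
    using update.hyps(1)
    by (intro poly_mapping_eqI) (auto simp: lookup_update lookup_add lookup_single in_keys_iff when_def)
  with update.IH show ?case
    by (simp add: assms)
qed (simp add: assms)

lemma lin_ext_monomials: "lin_ext (\<lambda>e. Poly_Mapping.single e 1) p = p"
  by (induction p rule: poly_mapping_single_induct) (simp_all add: lin_ext_add tconst_def mult_single)

lemma lin_ext_mult:
  assumes "\<And>x y. F (x + y) = F x * F y"
  shows "lin_ext F (p * q) = lin_ext F p * lin_ext F q"
proof (induction p rule: poly_mapping_single_induct)
  case (single m c)
  show ?case
  proof (induction q rule: poly_mapping_single_induct)
    case (single m' c')
    then show ?case
      by (simp add: mult_single assms tconst_mult algebra_simps)
  qed (simp_all add: distrib_left lin_ext_add)
qed (simp_all add: distrib_right lin_ext_add)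

section \<open>\<open>t\<^sub>a - t\<^sub>b\<close> is not a zero divisor\<close>

lemma lookup_single_mult_add:
  fixes X :: "'a::comm_ring_1 tpoly"
  shows "Poly_Mapping.lookup (Poly_Mapping.single d c * X) (d + e) = c * Poly_Mapping.lookup X e"
  by (induction X rule: poly_mapping_single_induct)
    (simp_all add: mult_single lookup_single when_def distrib_left lookup_add)

lemma lookup_single_mult_eq_0:
  fixes X :: "'a::comm_ring_1 tpoly"
  assumes "Poly_Mapping.lookup e v < Poly_Mapping.lookup d v"
  shows "Poly_Mapping.lookup (Poly_Mapping.single d c * X) e = 0"
proof (induction X rule: poly_mapping_single_induct)
  case (single m c')
  have "d + m \<noteq> e"
  proof
    assume "d + m = e"
    then have "Poly_Mapping.lookup e v = Poly_Mapping.lookup d v + Poly_Mapping.lookup m v"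
      by (auto simp: lookup_add)
    with assms show False by simp
  qed
  then show ?case by (simp add: mult_single lookup_single when_def)
qed (simp_all add: distrib_left lookup_add)

text \<open>From \<open>t\<^sub>a X = t\<^sub>b X\<close>, a coefficient of \<open>X\<close> at an exponent with \<open>t\<^sub>b\<close>-degree \<open>k + 1\<close>
  equals one at \<open>t\<^sub>b\<close>-degree \<open>k\<close>; at \<open>t\<^sub>b\<close>-degree \<open>0\<close> it vanishes.\<close>

lemma tvar_diff_mult_eq_0D:
  fixes X :: "'a::comm_ring_1 tpoly"
  assumes ab: "a \<noteq> b" and h: "(tvar a - tvar b) * X = 0"
  shows "X = 0"
proof -
  have eq: "tvar a * X = tvar b * X"
    using h by (simp add: algebra_simps)
  have shift: "Poly_Mapping.lookup X e = Poly_Mapping.lookup (tvar b * X) (Poly_Mapping.single a 1 + e)" for e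
  proof -
    have "Poly_Mapping.lookup X e = Poly_Mapping.lookup (tvar a * X) (Poly_Mapping.single a 1 + e)"
      by (simp add: tvar_def lookup_single_mult_add)
    then show ?thesis
      by (simp only: eq)
  qed
  have "\<forall>e. Poly_Mapping.lookup e b = k \<longrightarrow> Poly_Mapping.lookup X e = 0" for k
  proof (induction k)
    case 0
    show ?case
      using ab by (auto simp: shift tvar_def lookup_add lookup_single intro!: lookup_single_mult_eq_0[where v = b])
  next
    case (Suc k)
    show ?case
    proof (intro allI impI)
      fix e :: "nat \<Rightarrow>\<^sub>0 nat"
      assume ek: "Poly_Mapping.lookup e b = Suc k"
      define e' where "e' = Poly_Mapping.update b k e"
      have "Poly_Mapping.single a 1 + e = Poly_Mapping.single b 1 + (Poly_Mapping.single a 1 + e')"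
        by (rule poly_mapping_eqI) (auto simp: e'_def lookup_add lookup_update lookup_single when_def ek)
      then have "Poly_Mapping.lookup X e = Poly_Mapping.lookup X (Poly_Mapping.single a 1 + e')"
        by (simp add: shift tvar_def lookup_single_mult_add)
      also have "\<dots> = 0"
        using Suc[rule_format, of "Poly_Mapping.single a 1 + e'"] ab
        by (simp add: lookup_add e'_def lookup_update lookup_single)
      finally show "Poly_Mapping.lookup X e = 0" .
    qed
  qed
  then show ?thesis
    by (intro poly_mapping_eqI) simp
qed

lemma tvar_diff_mult_left_cancel:
  fixes X Y :: "'a::comm_ring_1 tpoly"
  assumes "a \<noteq> b" and "(tvar a - tvar b) * X = (tvar a - tvar b) * Y"
  shows "X = Y"
  using tvar_diff_mult_eq_0D[OF assms(1), of "X - Y"] assms(2) by (simp add: algebra_simps)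

section \<open>Substituting \<open>t\<^sub>a\<close> for \<open>t\<^sub>b\<close>\<close>

definition tsubst_mono :: "nat \<Rightarrow> nat \<Rightarrow> (nat \<Rightarrow>\<^sub>0 nat) \<Rightarrow> 'a::comm_ring_1 tpoly" where
  "tsubst_mono b a e = Poly_Mapping.single (Poly_Mapping.update b 0 e) 1 * tvar a ^ Poly_Mapping.lookup e b"

definition tsubst :: "nat \<Rightarrow> nat \<Rightarrow> 'a::comm_ring_1 tpoly \<Rightarrow> 'a tpoly" where
  "tsubst b a = lin_ext (tsubst_mono b a)"

lemma update_0_add:
  "Poly_Mapping.update b 0 (e + e') = Poly_Mapping.update b 0 e + Poly_Mapping.update b 0 (e' :: nat \<Rightarrow>\<^sub>0 nat)"
  by (rule poly_mapping_eqI) (simp add: lookup_update lookup_add)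

lemma tvar_power: "tvar b ^ k = Poly_Mapping.single (Poly_Mapping.single b k) (1::'a::comm_ring_1)"
  by (induction k) (simp_all add: tvar_def mult_single single_add[symmetric])

lemma single_eq_update_0_mult_tvar_power:
  "Poly_Mapping.single e (1::'a::comm_ring_1) =
     Poly_Mapping.single (Poly_Mapping.update b 0 e) 1 * tvar b ^ Poly_Mapping.lookup e b"
proof -
  have "e = Poly_Mapping.update b 0 e + Poly_Mapping.single b (Poly_Mapping.lookup e b)"
    by (rule poly_mapping_eqI) (auto simp: lookup_update lookup_add lookup_single when_def)
  then show ?thesis
    by (metis mult_single mult_1 tvar_power)
qed

lemma tsubst_add: "tsubst b a (p + q) = tsubst b a p + tsubst b a q"
  by (simp add: tsubst_def lin_ext_add)

lemma tsubst_mult: "tsubst b a (p * q) = tsubst b a p * tsubst b a q"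
proof -
  have single_add_1: "Poly_Mapping.single (x + y) (1::'a) = Poly_Mapping.single x 1 * Poly_Mapping.single y 1" for x y
    by (simp add: mult_single)
  show ?thesis
    unfolding tsubst_def
    by (intro lin_ext_mult) (simp add: tsubst_mono_def update_0_add single_add_1 lookup_add power_add algebra_simps)
qed

lemma tsubst_tconst: "tsubst b a (tconst c) = tconst c"
proof -
  have "Poly_Mapping.update b 0 0 = (0 :: nat \<Rightarrow>\<^sub>0 nat)"
    by (rule poly_mapping_eqI) (simp add: lookup_update)
  then show ?thesis
    by (simp add: tsubst_def tconst_def[of c] tsubst_mono_def)
qed

lemma tsubst_tvar: "tsubst b a (tvar x) = (if x = b then tvar a else tvar x)"
proof -
  have "Poly_Mapping.update b 0 (Poly_Mapping.single x 1) =
      (if x = b then 0 else (Poly_Mapping.single x 1 :: nat \<Rightarrow>\<^sub>0 nat))"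
    by (rule poly_mapping_eqI) (auto simp: lookup_update lookup_single when_def)
  then show ?thesis
    by (simp add: tsubst_def tvar_def tsubst_mono_def lookup_single)
qed

lemma tsubst_tvar_other: "x \<noteq> b \<Longrightarrow> tsubst b a (tvar x) = tvar x"
  by (simp add: tsubst_tvar)

definition tpoly_hom :: "('a::comm_ring_1 tpoly \<Rightarrow> 'a tpoly) \<Rightarrow> bool" where
  "tpoly_hom h \<longleftrightarrow> (\<forall>p q. h (p + q) = h p + h q) \<and> (\<forall>p q. h (p * q) = h p * h q) \<and>
     (\<forall>c. h (tconst c) = tconst c)"

lemma tpoly_hom_tsubst: "tpoly_hom (tsubst b a)"
  by (simp add: tpoly_hom_def tsubst_add tsubst_mult tsubst_tconst)

lemma tpoly_hom_comp: "tpoly_hom h \<Longrightarrow> tpoly_hom g \<Longrightarrow> tpoly_hom (\<lambda>p. h (g p))"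
  by (simp add: tpoly_hom_def)

lemma tpoly_hom_add: "tpoly_hom h \<Longrightarrow> h (p + q) = h p + h q"
  by (simp add: tpoly_hom_def)

lemma tpoly_hom_mult: "tpoly_hom h \<Longrightarrow> h (p * q) = h p * h q"
  by (simp add: tpoly_hom_def)

lemma tpoly_hom_tconst: "tpoly_hom h \<Longrightarrow> h (tconst c) = tconst c"
  by (simp add: tpoly_hom_def)

lemma tpoly_hom_0: "tpoly_hom h \<Longrightarrow> h 0 = 0"
  using tpoly_hom_tconst[of h 0] by simp

lemma tpoly_hom_1: "tpoly_hom h \<Longrightarrow> h 1 = 1"
  using tpoly_hom_tconst[of h 1] by simp

lemma tpoly_hom_diff:
  assumes h: "tpoly_hom h"
  shows "h (p - q) = h p - h q"
  using tpoly_hom_add[OF h, of "p - q" q] by (simp add: eq_diff_eq)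

lemma tpoly_hom_power: "tpoly_hom h \<Longrightarrow> h (p ^ k) = h p ^ k"
  by (induction k) (simp_all add: tpoly_hom_1 tpoly_hom_mult)

lemma tpoly_hom_eqI:
  assumes h: "tpoly_hom h" and g: "tpoly_hom g" and var: "\<And>x. h (tvar x) = g (tvar x)"
  shows "h p = g p"
proof -
  have mono: "h (Poly_Mapping.single e 1) = g (Poly_Mapping.single e 1)" for e
  proof (induction "card (Poly_Mapping.keys e)" arbitrary: e rule: less_induct)
    case less
    show ?case
    proof (cases "Poly_Mapping.keys e = {}")
      case True
      then show ?thesis
        using tpoly_hom_1[OF h] tpoly_hom_1[OF g] by simp
    next
      case False
      then obtain b where b: "b \<in> Poly_Mapping.keys e"
        by blast
      have "card (Poly_Mapping.keys (Poly_Mapping.update b 0 e)) < card (Poly_Mapping.keys e)"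
        using b card_Diff1_less[OF finite_keys b] by (simp add: keys_update)
      then have "h (Poly_Mapping.single (Poly_Mapping.update b 0 e) 1) =
          g (Poly_Mapping.single (Poly_Mapping.update b 0 e) 1)"
        by (rule less)
      then show ?thesis
        by (subst (1 2) single_eq_update_0_mult_tvar_power[of e b])
          (simp add: tpoly_hom_mult[OF h] tpoly_hom_mult[OF g] tpoly_hom_power[OF h] tpoly_hom_power[OF g] var)
    qed
  qed
  show ?thesis
  proof (induction p rule: poly_mapping_single_induct)
    case (single m c)
    have "Poly_Mapping.single m c = tconst c * Poly_Mapping.single m 1"
      by (simp add: tconst_def mult_single)
    then show ?case
      by (simp add: tpoly_hom_mult[OF h] tpoly_hom_mult[OF g] tpoly_hom_tconst[OF h] tpoly_hom_tconst[OF g] mono)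
  qed (simp_all add: tpoly_hom_0 tpoly_hom_add h g)
qed

lemma tsubst_tsubst_commute:
  assumes "b \<noteq> d" "a \<noteq> d" "c \<noteq> b"
  shows "tsubst b a (tsubst d c G) = tsubst d c (tsubst b a G)"
  by (rule tpoly_hom_eqI[OF tpoly_hom_comp[OF tpoly_hom_tsubst tpoly_hom_tsubst]
        tpoly_hom_comp[OF tpoly_hom_tsubst tpoly_hom_tsubst]])
    (use assms in \<open>auto simp: tsubst_tvar\<close>)

lemma tsubst_tsubst_absorb:
  assumes "c \<noteq> b"
  shows "tsubst b a (tsubst b c G) = tsubst b c G"
  by (rule tpoly_hom_eqI[OF tpoly_hom_comp[OF tpoly_hom_tsubst tpoly_hom_tsubst] tpoly_hom_tsubst])
    (use assms in \<open>auto simp: tsubst_tvar\<close>)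

lemma tsubst_tsubst_chain:
  assumes "i \<noteq> j" "j \<noteq> k" "i \<noteq> k"
  shows "tsubst j i (tsubst k j G) = tsubst k i (tsubst j i G)"
  by (rule tpoly_hom_eqI[OF tpoly_hom_comp[OF tpoly_hom_tsubst tpoly_hom_tsubst]
        tpoly_hom_comp[OF tpoly_hom_tsubst tpoly_hom_tsubst]])
    (use assms in \<open>auto simp: tsubst_tvar\<close>)

lemma tsubst_prod: "tsubst b a (\<Prod>x\<in>S. g x) = (\<Prod>x\<in>S. tsubst b a (g x))"
  by (induction S rule: infinite_finite_induct) (simp_all add: tsubst_mult tpoly_hom_1[OF tpoly_hom_tsubst])

section \<open>Divided differences\<close>

text \<open>The divided difference \<open>(G[t\<^sub>b := t\<^sub>a] - G) / (t\<^sub>a - t\<^sub>b)\<close>, defined monomialwise by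
  \<open>(t\<^sub>a\<^sup>k - t\<^sub>b\<^sup>k) / (t\<^sub>a - t\<^sub>b) = \<Sum>i<k. t\<^sub>b\<^sup>k\<^sup>-\<^sup>1\<^sup>-\<^sup>i t\<^sub>a\<^sup>i\<close>, so that no division is needed.\<close>

definition hsum :: "nat \<Rightarrow> nat \<Rightarrow> nat \<Rightarrow> 'a::comm_ring_1 tpoly" where
  "hsum a b k = (\<Sum>i<k. tvar b ^ (k - Suc i) * tvar a ^ i)"

definition divdiff_mono :: "nat \<Rightarrow> nat \<Rightarrow> (nat \<Rightarrow>\<^sub>0 nat) \<Rightarrow> 'a::comm_ring_1 tpoly" where
  "divdiff_mono a b e = Poly_Mapping.single (Poly_Mapping.update b 0 e) 1 * hsum a b (Poly_Mapping.lookup e b)"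

definition divdiff :: "nat \<Rightarrow> nat \<Rightarrow> 'a::comm_ring_1 tpoly \<Rightarrow> 'a tpoly" where
  "divdiff a b = lin_ext (divdiff_mono a b)"

lemma divdiff_mono_char:
  "(tvar a - tvar b) * divdiff_mono a b e = tsubst_mono b a e - Poly_Mapping.single e 1"
proof -
  have "(tvar a - tvar b) * hsum a b k = tvar a ^ k - tvar b ^ k" for k :: nat
    by (simp add: hsum_def power_diff_sumr2)
  then have "(tvar a - tvar b) * divdiff_mono a b e = Poly_Mapping.single (Poly_Mapping.update b 0 e) 1 *
      (tvar a ^ Poly_Mapping.lookup e b - tvar b ^ Poly_Mapping.lookup e b)"
    by (metis divdiff_mono_def mult.left_commute)
  also have "\<dots> = tsubst_mono b a e - Poly_Mapping.single e 1"
    by (simp add: tsubst_mono_def right_diff_distrib flip: single_eq_update_0_mult_tvar_power)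
  finally show ?thesis .
qed

lemma divdiff_char: "(tvar a - tvar b) * divdiff a b G = tsubst b a G - G"
  by (simp add: divdiff_def mult_lin_ext divdiff_mono_char lin_ext_fun_diff tsubst_def lin_ext_monomials)

lemma divdiff_add: "divdiff a b (p + q) = divdiff a b p + divdiff a b q"
  by (simp add: divdiff_def lin_ext_add)

lemma divdiff_diff: "divdiff a b (p - q) = divdiff a b p - divdiff a b q"
  by (simp add: divdiff_def lin_ext_diff)

lemma divdiff_fixed_eq_0:
  assumes "a \<noteq> b" "tsubst b a G = G"
  shows "divdiff a b G = 0"
  by (rule tvar_diff_mult_eq_0D[OF assms(1)]) (simp add: divdiff_char assms(2))

lemma fixed_mult_divdiff_char:
  assumes "tsubst b a Q = Q"
  shows "Q * ((tvar a - tvar b) * divdiff a b H) = tsubst b a (Q * H) - Q * H"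
  by (simp add: divdiff_char tsubst_mult assms right_diff_distrib)

lemma divdiff_mult_fixed:
  assumes ab: "a \<noteq> b" and P: "tsubst b a P = P"
  shows "divdiff a b (P * G) = P * divdiff a b G"
proof (rule tvar_diff_mult_left_cancel[OF ab])
  have "(tvar a - tvar b) * divdiff a b (P * G) = P * ((tvar a - tvar b) * divdiff a b G)"
    using fixed_mult_divdiff_char[OF P, of G] by (simp only: divdiff_char)
  then show "(tvar a - tvar b) * divdiff a b (P * G) = (tvar a - tvar b) * (P * divdiff a b G)"
    by (simp only: mult.left_commute)
qed

lemma tsubst_mult_divdiff_char:
  "(tsubst b a (tvar c) - tsubst b a (tvar d)) * tsubst b a (divdiff c d G) = tsubst b a (tsubst d c G) - tsubst b a G"
proof -
  have "tsubst b a ((tvar c - tvar d) * divdiff c d G) = tsubst b a (tsubst d c G - G)"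
    by (simp only: divdiff_char)
  then show ?thesis
    by (simp add: tsubst_mult tpoly_hom_diff[OF tpoly_hom_tsubst])
qed

lemma tsubst_tvar_diff: "x \<noteq> b \<Longrightarrow> y \<noteq> b \<Longrightarrow> tsubst b a (tvar x - tvar y) = tvar x - tvar y"
  by (simp add: tpoly_hom_diff[OF tpoly_hom_tsubst] tsubst_tvar)

lemma divdiff_commute_distinct_tails:
  assumes ab: "a \<noteq> b" and cd: "c \<noteq> d" and ad: "a \<noteq> d" and cb: "c \<noteq> b" and bd: "b \<noteq> d"
  shows "divdiff a b (divdiff c d G) = divdiff c d (divdiff a b G)"
proof -
  have "(tvar c - tvar d) * ((tvar a - tvar b) * divdiff a b (divdiff c d G))
      = tsubst b a ((tvar c - tvar d) * divdiff c d G) - (tvar c - tvar d) * divdiff c d G"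
    by (rule fixed_mult_divdiff_char) (use cb bd in \<open>simp add: tsubst_tvar_diff\<close>)
  also have "\<dots> = tsubst b a (tsubst d c G) - tsubst b a G - (tsubst d c G - G)"
    by (simp add: divdiff_char tpoly_hom_diff[OF tpoly_hom_tsubst])
  also have "\<dots> = tsubst d c (tsubst b a G) - tsubst d c G - (tsubst b a G - G)"
    using tsubst_tsubst_commute[of b d a c G] bd ad cb by (simp add: algebra_simps)
  also have "\<dots> = tsubst d c ((tvar a - tvar b) * divdiff a b G) - (tvar a - tvar b) * divdiff a b G"
    by (simp add: divdiff_char tpoly_hom_diff[OF tpoly_hom_tsubst])
  also have "\<dots> = (tvar a - tvar b) * ((tvar c - tvar d) * divdiff c d (divdiff a b G))"
    by (rule fixed_mult_divdiff_char[symmetric]) (use ad bd in \<open>simp add: tsubst_tvar_diff\<close>)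
  also have "\<dots> = (tvar c - tvar d) * ((tvar a - tvar b) * divdiff c d (divdiff a b G))"
    by (simp only: mult.left_commute)
  finally show ?thesis
    by (metis ab cd tvar_diff_mult_left_cancel)
qed

text \<open>The right-hand side changes sign under \<open>a \<leftrightarrow> c\<close>, as does \<open>t\<^sub>c - t\<^sub>a\<close>; this gives commutation.\<close>

lemma divdiff_divdiff_same_tail:
  assumes ab: "a \<noteq> b" and cb: "c \<noteq> b"
  shows "(tvar c - tvar a) * ((tvar c - tvar b) * ((tvar a - tvar b) * divdiff a b (divdiff c b G)))
    = (tvar a - tvar b) * tsubst b c G - (tvar c - tvar b) * tsubst b a G + (tvar c - tvar a) * G"
proof -
  let ?H = "divdiff c b G"
  have "(tvar c - tvar a) * tsubst b a ?H = tsubst b a ((tvar c - tvar b) * ?H)"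
    using cb ab by (simp add: tsubst_mult tsubst_tvar tpoly_hom_diff[OF tpoly_hom_tsubst])
  also have "\<dots> = tsubst b c G - tsubst b a G"
    using cb by (simp add: divdiff_char tpoly_hom_diff[OF tpoly_hom_tsubst] tsubst_tsubst_absorb)
  finally have sub_H: "(tvar c - tvar a) * tsubst b a ?H = tsubst b c G - tsubst b a G" .
  have "(tvar c - tvar a) * ((tvar c - tvar b) * ((tvar a - tvar b) * divdiff a b ?H))
      = (tvar c - tvar a) * ((tvar c - tvar b) * (tsubst b a ?H - ?H))"
    by (simp only: divdiff_char)
  also have "\<dots> = (tvar c - tvar b) * ((tvar c - tvar a) * tsubst b a ?H) - (tvar c - tvar a) * ((tvar c - tvar b) * ?H)"
    by (simp add: algebra_simps)
  also have "\<dots> = (tvar c - tvar b) * (tsubst b c G - tsubst b a G) - (tvar c - tvar a) * (tsubst b c G - G)"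
    by (simp only: sub_H divdiff_char)
  finally show ?thesis
    by (simp add: algebra_simps)
qed

lemma divdiff_commute_same_tail:
  assumes ab: "a \<noteq> b" and cb: "c \<noteq> b"
  shows "divdiff a b (divdiff c b G) = divdiff c b (divdiff a b G)"
proof (cases "a = c")
  case False
  then have ca: "c \<noteq> a"
    by simp
  have "(tvar c - tvar a) * ((tvar c - tvar b) * ((tvar a - tvar b) * divdiff c b (divdiff a b G)))
      = - ((tvar a - tvar c) * ((tvar a - tvar b) * ((tvar c - tvar b) * divdiff c b (divdiff a b G))))"
    by (simp add: algebra_simps)
  also have "\<dots> = - ((tvar c - tvar b) * tsubst b a G - (tvar a - tvar b) * tsubst b c G + (tvar a - tvar c) * G)"
    by (simp only: divdiff_divdiff_same_tail[OF cb ab])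
  also have "\<dots> = (tvar a - tvar b) * tsubst b c G - (tvar c - tvar b) * tsubst b a G + (tvar c - tvar a) * G"
    by (simp add: algebra_simps)
  also have "\<dots> = (tvar c - tvar a) * ((tvar c - tvar b) * ((tvar a - tvar b) * divdiff a b (divdiff c b G)))"
    by (simp only: divdiff_divdiff_same_tail[OF ab cb])
  finally show ?thesis
    by (metis tvar_diff_mult_left_cancel ab ca cb)
qed simp

lemma divdiff_commute:
  assumes "a \<noteq> b" "c \<noteq> d" "a \<noteq> d" "c \<noteq> b"
  shows "divdiff a b (divdiff c d G) = divdiff c d (divdiff a b G)"
  using assms divdiff_commute_distinct_tails divdiff_commute_same_tail by (cases "b = d") auto

section \<open>The operators \<open>A\<^sub>a\<^sub>,\<^sub>b\<close>\<close>

definition fpoly :: "'a::comm_ring_1 \<Rightarrow> 'a \<Rightarrow> 'a tpoly \<Rightarrow> 'a tpoly" where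
  "fpoly \<beta> \<alpha> x = x * x + tconst \<beta> * x + tconst \<alpha>"

definition Aop :: "'a::comm_ring_1 \<Rightarrow> 'a \<Rightarrow> nat \<Rightarrow> nat \<Rightarrow> 'a tpoly \<Rightarrow> 'a tpoly" where
  "Aop \<beta> \<alpha> a b G = tvar a * G + fpoly \<beta> \<alpha> (tvar a) * divdiff a b G"

lemma tsubst_fpoly: "tsubst b a (fpoly \<beta> \<alpha> x) = fpoly \<beta> \<alpha> (tsubst b a x)"
  by (simp add: fpoly_def tsubst_add tsubst_mult tsubst_tconst)

lemma tsubst_fpoly_tvar: "x \<noteq> b \<Longrightarrow> tsubst b a (fpoly \<beta> \<alpha> (tvar x)) = fpoly \<beta> \<alpha> (tvar x)"
  by (simp add: tsubst_fpoly tsubst_tvar)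

lemma Aop_diff: "Aop \<beta> \<alpha> a b (X - Y) = Aop \<beta> \<alpha> a b X - Aop \<beta> \<alpha> a b Y"
  by (simp add: Aop_def divdiff_diff algebra_simps)

lemma Aop_tconst:
  assumes "a \<noteq> b"
  shows "Aop \<beta> \<alpha> a b (tconst c * X) = tconst c * Aop \<beta> \<alpha> a b X"
  using divdiff_mult_fixed[OF assms tsubst_tconst, of c X] by (simp add: Aop_def algebra_simps)

lemma Aop_commute:
  assumes ab: "a \<noteq> b" and cd: "c \<noteq> d" and ad: "a \<noteq> d" and cb: "c \<noteq> b"
  shows "Aop \<beta> \<alpha> a b (Aop \<beta> \<alpha> c d G) = Aop \<beta> \<alpha> c d (Aop \<beta> \<alpha> a b G)"
proof -
  have s1: "tsubst b a (tvar c) = tvar c" "tsubst b a (fpoly \<beta> \<alpha> (tvar c)) = fpoly \<beta> \<alpha> (tvar c)"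
    using cb by (simp_all add: tsubst_tvar_other tsubst_fpoly_tvar)
  have s2: "tsubst d c (tvar a) = tvar a" "tsubst d c (fpoly \<beta> \<alpha> (tvar a)) = fpoly \<beta> \<alpha> (tvar a)"
    using ad by (simp_all add: tsubst_tvar_other tsubst_fpoly_tvar)
  show ?thesis
    unfolding Aop_def
    by (simp only: divdiff_add divdiff_mult_fixed[OF ab s1(1)] divdiff_mult_fixed[OF ab s1(2)]
        divdiff_mult_fixed[OF cd s2(1)] divdiff_mult_fixed[OF cd s2(2)] divdiff_commute[OF ab cd ad cb])
      (simp add: algebra_simps)
qed

text \<open>The pattern of \<open>Jgen\<close>, with the images of \<open>x\<^sub>i\<^sub>jx\<^sub>j\<^sub>k\<close>, \<open>x\<^sub>i\<^sub>kx\<^sub>i\<^sub>j\<close>, \<open>x\<^sub>i\<^sub>kx\<^sub>j\<^sub>k\<close>, \<open>x\<^sub>i\<^sub>k\<close>, \<open>1\<close> as arguments.\<close>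

definition jgen_comb :: "'a::comm_ring_1 \<Rightarrow> 'a \<Rightarrow> 'a tpoly \<Rightarrow> 'a tpoly \<Rightarrow> 'a tpoly \<Rightarrow> 'a tpoly \<Rightarrow> 'a tpoly \<Rightarrow> 'a tpoly" where
  "jgen_comb \<beta> \<alpha> P Q R S U = P - Q - R - tconst \<beta> * S - tconst \<alpha> * U"

text \<open>The relation among the \<open>A\<close>'s, multiplied by \<open>(t\<^sub>i - t\<^sub>j)(t\<^sub>i - t\<^sub>k)(t\<^sub>j - t\<^sub>k)\<close>, is a ring identity.
  The variables stand for \<open>D1 = \<partial>\<^sub>j\<^sub>k Y\<close>, \<open>D2 = \<partial>\<^sub>i\<^sub>j (A\<^sub>j\<^sub>k Y)\<close>, \<open>D3 = \<partial>\<^sub>i\<^sub>j Y\<close>, \<open>D4 = \<partial>\<^sub>i\<^sub>k Y\<close>,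
  \<open>D5 = \<partial>\<^sub>i\<^sub>k \<partial>\<^sub>i\<^sub>j Y\<close>, \<open>D6 = \<partial>\<^sub>i\<^sub>k \<partial>\<^sub>j\<^sub>k Y\<close> and substituted versions of \<open>Y\<close>, \<open>D1\<close>, \<open>D3\<close>;
  the hypotheses are the defining equations of these divided differences.\<close>

lemma Aop_relation_ring_identity:
  fixes ti tj tk b a Y Yji Yki Ykj Z D1 D2 SD1 D3 D4 D5 SD3 D6 SD1k fi fj :: "'r::comm_ring_1"
  assumes fi: "fi = ti*ti + b*ti + a" and fj: "fj = tj*tj + b*tj + a"
  and h1: "(tj - tk)*D1 = Ykj - Y"
  and h2: "(ti - tj)*D2 = (ti*Yji + fi*SD1) - (tj*Y + fj*D1)"
  and h3: "(ti - tk)*SD1 = Z - Yji"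
  and h4: "(ti - tj)*D3 = Yji - Y"
  and h5: "(ti - tk)*D4 = Yki - Y"
  and h6: "(ti - tk)*D5 = SD3 - D3"
  and h7: "(ti - tj)*SD3 = Z - Yki"
  and h8: "(ti - tk)*D6 = SD1k - D1"
  and h9: "(tj - ti)*SD1k = Ykj - Yki"
  shows "(ti-tj)*((ti-tk)*((tj-tk)*((ti*(tj*Y + fj*D1) + fi*D2) - (ti*(ti*Y + fi*D3) + fi*(ti*D4 + fi*D5))
     - (ti*(tj*Y + fj*D1) + fi*(tj*D4 + fj*D6)) - b*(ti*Y + fi*D4) - a*Y))) = 0"
proof -
  define E' where "E' = D2 - Y - ti*D3 - (ti+tj+b)*D4 - fi*D5 - fj*D6"
  have fE: "(ti*(tj*Y + fj*D1) + fi*D2) - (ti*(ti*Y + fi*D3) + fi*(ti*D4 + fi*D5))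
     - (ti*(tj*Y + fj*D1) + fi*(tj*D4 + fj*D6)) - b*(ti*Y + fi*D4) - a*Y = fi * E'"
    unfolding E'_def fi by (simp add: algebra_simps)
  have expand: "(ti-tj)*((ti-tk)*((tj-tk)*E')) = (ti-tk)*(tj-tk)*((ti-tj)*D2) - (ti-tj)*(ti-tk)*(tj-tk)*Y
      - ti*(ti-tk)*(tj-tk)*((ti-tj)*D3) - (ti+tj+b)*(ti-tj)*(tj-tk)*((ti-tk)*D4)
      - fi*(tj-tk)*((ti-tj)*((ti-tk)*D5)) - fj*((ti-tj)*(tj-tk)*((ti-tk)*D6))"
    unfolding E'_def by (simp add: algebra_simps)
  have cleared_D2: "(ti-tk)*(tj-tk)*((ti-tj)*D2) = (ti-tk)*(tj-tk)*(ti*Yji - tj*Y) + fi*(tj-tk)*(Z - Yji) - fj*(ti-tk)*(Ykj - Y)"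
  proof -
    have "(ti-tk)*(tj-tk)*((ti-tj)*D2) = (ti-tk)*(tj-tk)*(ti*Yji - tj*Y) + fi*(tj-tk)*((ti-tk)*SD1) - fj*(ti-tk)*((tj-tk)*D1)"
      unfolding h2 by (simp add: algebra_simps)
    then show ?thesis unfolding h3 h1 .
  qed
  have cleared_D5: "(ti-tj)*((ti-tk)*D5) = (Z - Yki) - (Yji - Y)"
  proof -
    have "(ti-tj)*((ti-tk)*D5) = (ti-tj)*SD3 - (ti-tj)*D3"
      unfolding h6 by (simp add: algebra_simps)
    then show ?thesis unfolding h7 h4 .
  qed
  have cleared_D6: "(ti-tj)*(tj-tk)*((ti-tk)*D6) = - (tj-tk)*(Ykj - Yki) - (ti-tj)*(Ykj - Y)"
  proof -
    have "(ti-tj)*(tj-tk)*((ti-tk)*D6) = - (tj-tk)*((tj-ti)*SD1k) - (ti-tj)*((tj-tk)*D1)"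
      unfolding h8 by (simp add: algebra_simps)
    then show ?thesis unfolding h9 h1 .
  qed
  have cleared_E: "(ti-tj)*((ti-tk)*((tj-tk)*E')) = 0"
    unfolding expand cleared_D2 cleared_D5 cleared_D6 h4 h5 fi fj by (simp add: algebra_simps)
  have "(ti-tj)*((ti-tk)*((tj-tk)*(fi*E'))) = fi*((ti-tj)*((ti-tk)*((tj-tk)*E')))"
    by (simp only: mult.left_commute)
  then show ?thesis unfolding fE cleared_E by simp
qed

lemma Aop_relation:
  assumes ij: "i \<noteq> j" and jk: "j \<noteq> k" and ik: "i \<noteq> k"
  shows "jgen_comb \<beta> \<alpha> (Aop \<beta> \<alpha> i j (Aop \<beta> \<alpha> j k Y)) (Aop \<beta> \<alpha> i k (Aop \<beta> \<alpha> i j Y))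
    (Aop \<beta> \<alpha> i k (Aop \<beta> \<alpha> j k Y)) (Aop \<beta> \<alpha> i k Y) Y = 0"
proof -
  define ti where "ti = (tvar i :: 'a tpoly)"
  define tj where "tj = (tvar j :: 'a tpoly)"
  define tk where "tk = (tvar k :: 'a tpoly)"
  define fi where "fi = fpoly \<beta> \<alpha> ti"
  define fj where "fj = fpoly \<beta> \<alpha> tj"
  define D1 where "D1 = divdiff j k Y"
  define AjkY where "AjkY = tj * Y + fj * D1"
  define D2 where "D2 = divdiff i j AjkY"
  define SD1 where "SD1 = tsubst j i D1"
  define D3 where "D3 = divdiff i j Y"
  define D4 where "D4 = divdiff i k Y"
  define D5 where "D5 = divdiff i k D3"
  define SD3 where "SD3 = tsubst k i D3"
  define D6 where "D6 = divdiff i k D1"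
  define SD1k where "SD1k = tsubst k i D1"
  define Yji where "Yji = tsubst j i Y"
  define Yki where "Yki = tsubst k i Y"
  define Ykj where "Ykj = tsubst k j Y"
  define Z where "Z = tsubst j i (tsubst k j Y)"
  have fi: "fi = ti*ti + tconst \<beta>*ti + tconst \<alpha>" by (simp add: fi_def fpoly_def)
  have fj: "fj = tj*tj + tconst \<beta>*tj + tconst \<alpha>" by (simp add: fj_def fpoly_def)
  have sji: "tsubst j i tj = ti" "tsubst j i tk = tk" "tsubst j i fj = fi" "tsubst j i ti = ti"
    using ij jk ik by (simp_all add: tj_def ti_def tk_def fi_def fj_def tsubst_tvar tsubst_fpoly)
  have ski: "tsubst k i ti = ti" "tsubst k i tj = tj" "tsubst k i tk = ti" "tsubst k i fi = fi" "tsubst k i fj = fj"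
    using ij jk ik by (simp_all add: tj_def ti_def tk_def fi_def fj_def tsubst_tvar tsubst_fpoly)
  have h1: "(tj - tk)*D1 = Ykj - Y" by (simp add: tj_def tk_def D1_def Ykj_def divdiff_char)
  have h2: "(ti - tj)*D2 = (ti*Yji + fi*SD1) - (tj*Y + fj*D1)"
    by (simp add: ti_def tj_def D2_def divdiff_char AjkY_def tsubst_add tsubst_mult sji[unfolded ti_def tj_def] Yji_def SD1_def)
  have h3: "(ti - tk)*SD1 = Z - Yji"
    using tsubst_mult_divdiff_char[of j i j k Y] ij jk ik
    by (simp add: ti_def tj_def tk_def tsubst_tvar SD1_def D1_def Z_def Yji_def)
  have h4: "(ti - tj)*D3 = Yji - Y" by (simp add: ti_def tj_def D3_def Yji_def divdiff_char)
  have h5: "(ti - tk)*D4 = Yki - Y" by (simp add: ti_def tk_def D4_def Yki_def divdiff_char)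
  have h6: "(ti - tk)*D5 = SD3 - D3" by (simp add: ti_def tk_def D5_def SD3_def divdiff_char)
  have h7: "(ti - tj)*SD3 = Z - Yki"
    using tsubst_mult_divdiff_char[of k i i j Y] ij jk ik
    by (simp add: ti_def tj_def tsubst_tvar SD3_def D3_def Z_def Yki_def tsubst_tsubst_chain[OF ij jk ik])
  have h8: "(ti - tk)*D6 = SD1k - D1" by (simp add: ti_def tk_def D6_def SD1k_def divdiff_char)
  have h9: "(tj - ti)*SD1k = Ykj - Yki"
    using tsubst_mult_divdiff_char[of k i j k Y] ij jk ik
    by (simp add: ti_def tj_def tsubst_tvar SD1k_def D1_def Ykj_def Yki_def tsubst_tsubst_absorb)
  have T1: "Aop \<beta> \<alpha> i j (Aop \<beta> \<alpha> j k Y) = ti*(tj*Y + fj*D1) + fi*D2"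
    by (simp add: Aop_def AjkY_def D2_def ti_def tj_def fi_def fj_def D1_def)
  have T2: "Aop \<beta> \<alpha> i k (Aop \<beta> \<alpha> i j Y) = ti*(ti*Y + fi*D3) + fi*(ti*D4 + fi*D5)"
  proof -
    have "divdiff i k (ti * Y + fi * D3) = ti*D4 + fi*D5"
      using ik by (simp add: divdiff_add divdiff_mult_fixed ski D4_def D5_def)
    then show ?thesis by (simp add: Aop_def ti_def fi_def D3_def)
  qed
  have T3: "Aop \<beta> \<alpha> i k (Aop \<beta> \<alpha> j k Y) = ti*(tj*Y + fj*D1) + fi*(tj*D4 + fj*D6)"
  proof -
    have "divdiff i k (tj * Y + fj * D1) = tj*D4 + fj*D6"
      using ik by (simp add: divdiff_add divdiff_mult_fixed ski D4_def D6_def)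
    then show ?thesis by (simp add: Aop_def ti_def tj_def fi_def fj_def D1_def)
  qed
  have T4: "Aop \<beta> \<alpha> i k Y = ti*Y + fi*D4" by (simp add: Aop_def ti_def fi_def D4_def)
  have M: "(ti-tj)*((ti-tk)*((tj-tk)*((ti*(tj*Y + fj*D1) + fi*D2) - (ti*(ti*Y + fi*D3) + fi*(ti*D4 + fi*D5))
     - (ti*(tj*Y + fj*D1) + fi*(tj*D4 + fj*D6)) - tconst \<beta>*(ti*Y + fi*D4) - tconst \<alpha>*Y))) = 0"
    by (rule Aop_relation_ring_identity[OF fi fj h1 h2 h3 h4 h5 h6 h7 h8 h9])
  show ?thesis
    unfolding jgen_comb_def T1 T2 T3 T4
    using M unfolding ti_def tj_def tk_def
    by (meson ij ik jk tvar_diff_mult_eq_0D)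
qed


section \<open>The functional on monomials\<close>

definition Aop_chain :: "'a::comm_ring_1 \<Rightarrow> 'a \<Rightarrow> nat \<Rightarrow> (nat \<Rightarrow> nat) \<Rightarrow> nat list \<Rightarrow> 'a tpoly \<Rightarrow> 'a tpoly" where
  "Aop_chain \<beta> \<alpha> l f ps G = List.foldr (\<lambda>p. Aop \<beta> \<alpha> l p ^^ f p) ps G"

lemma Aop_chain_Nil [simp]: "Aop_chain \<beta> \<alpha> l f [] G = G"
  by (simp add: Aop_chain_def)

lemma Aop_chain_Cons [simp]:
  "Aop_chain \<beta> \<alpha> l f (p # ps) G = (Aop \<beta> \<alpha> l p ^^ f p) (Aop_chain \<beta> \<alpha> l f ps G)"
  by (simp add: Aop_chain_def)

lemma funpow_Aop_diff:
  "a \<noteq> b \<Longrightarrow> (Aop \<beta> \<alpha> a b ^^ k) (X - Y) = (Aop \<beta> \<alpha> a b ^^ k) X - (Aop \<beta> \<alpha> a b ^^ k) Y"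
  by (induction k) (simp_all add: Aop_diff)

lemma funpow_Aop_tconst:
  "a \<noteq> b \<Longrightarrow> (Aop \<beta> \<alpha> a b ^^ k) (tconst c * X) = tconst c * (Aop \<beta> \<alpha> a b ^^ k) X"
  by (induction k) (simp_all add: Aop_tconst)

lemma funpow_Aop_commute:
  assumes "a \<noteq> b" "c \<noteq> d" "a \<noteq> d" "c \<noteq> b"
  shows "Aop \<beta> \<alpha> a b ((Aop \<beta> \<alpha> c d ^^ k) G) = (Aop \<beta> \<alpha> c d ^^ k) (Aop \<beta> \<alpha> a b G)"
  by (induction k) (simp_all add: Aop_commute[OF assms])

lemma Aop_chain_diff:
  "l \<notin> set ps \<Longrightarrow> Aop_chain \<beta> \<alpha> l f ps (X - Y) = Aop_chain \<beta> \<alpha> l f ps X - Aop_chain \<beta> \<alpha> l f ps Y"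
  by (induction ps) (auto simp: funpow_Aop_diff)

lemma Aop_chain_tconst:
  "l \<notin> set ps \<Longrightarrow> Aop_chain \<beta> \<alpha> l f ps (tconst c * X) = tconst c * Aop_chain \<beta> \<alpha> l f ps X"
  by (induction ps) (auto simp: funpow_Aop_tconst)

lemma Aop_Aop_chain_commute:
  assumes "a \<noteq> b" "l \<notin> set ps" "a \<notin> set ps" "l \<noteq> b"
  shows "Aop \<beta> \<alpha> a b (Aop_chain \<beta> \<alpha> l f ps G) = Aop_chain \<beta> \<alpha> l f ps (Aop \<beta> \<alpha> a b G)"
  using assms by (induction ps) (auto simp: funpow_Aop_commute)

lemma Aop_chain_Suc_exponent:
  assumes "distinct ps" "q \<in> set ps" "l \<notin> set ps"
  shows "Aop_chain \<beta> \<alpha> l (f(q := Suc (f q))) ps G = Aop \<beta> \<alpha> l q (Aop_chain \<beta> \<alpha> l f ps G)"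
  using assms
proof (induction ps)
  case (Cons p ps)
  show ?case
  proof (cases "p = q")
    case True
    with Cons.prems have "Aop_chain \<beta> \<alpha> l (f(q := Suc (f q))) ps G = Aop_chain \<beta> \<alpha> l f ps G"
      by (auto simp: Aop_chain_def intro!: foldr_cong)
    with True show ?thesis
      by (simp only: Aop_chain_Cons fun_upd_same funpow.simps(2) comp_apply)
  next
    case False
    with Cons.prems have "l \<noteq> q" "l \<noteq> p"
      by auto
    with False Cons show ?thesis
      by (simp add: funpow_Aop_commute)
  qed
qed simp

lemma funpow_Aop_fixed:
  assumes "l \<noteq> p" "tsubst p l X = X"
  shows "(Aop \<beta> \<alpha> l p ^^ k) X = tvar l ^ k * X"
proof (induction k)
  case (Suc k)
  have "divdiff l p (tvar l ^ k * X) = 0"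
    using assms
    by (intro divdiff_fixed_eq_0) (simp_all add: tsubst_mult tpoly_hom_power[OF tpoly_hom_tsubst] tsubst_tvar_other)
  with Suc show ?case
    by (simp add: Aop_def mult.assoc)
qed simp

lemma Aop_chain_fixed:
  assumes "\<forall>p\<in>set ps. p \<noteq> l \<and> (f p \<noteq> 0 \<longrightarrow> tsubst p l G = G)"
  shows "Aop_chain \<beta> \<alpha> l f ps G = tvar l ^ sum_list (map f ps) * G"
  using assms
proof (induction ps)
  case (Cons p ps)
  then have IH: "Aop_chain \<beta> \<alpha> l f ps G = tvar l ^ sum_list (map f ps) * G"
    by auto
  show ?case
  proof (cases "f p = 0")
    case False
    with Cons.prems have "tsubst p l (tvar l ^ sum_list (map f ps) * G) = tvar l ^ sum_list (map f ps) * G"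
      "l \<noteq> p"
      by (auto simp: tsubst_mult tpoly_hom_power[OF tpoly_hom_tsubst] tsubst_tvar_other)
    then show ?thesis
      using IH by (simp add: funpow_Aop_fixed power_add mult.assoc)
  qed (use IH in simp)
qed simp

text \<open>\<open>row_op n l m\<close> is \<open>B\<^sub>l = \<Prod>\<^bsub>l < p \<le> n\<^esub> A\<^sub>l\<^sub>,\<^sub>p\<^bsup>m(l,p)\<^esup>\<close> and \<open>rows_from n l m = B\<^sub>l (B\<^sub>l\<^sub>+\<^sub>1 (\<dots> (B\<^sub>n 1)))\<close>;
  the functional is \<open>Fmono n m = rows_from n 1 m\<close> on monomials.\<close>

definition row_op :: "'a::comm_ring_1 \<Rightarrow> 'a \<Rightarrow> nat \<Rightarrow> nat \<Rightarrow> ((nat \<times> nat) \<Rightarrow>\<^sub>0 nat) \<Rightarrow> 'a tpoly \<Rightarrow> 'a tpoly" where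
  "row_op \<beta> \<alpha> n l m = Aop_chain \<beta> \<alpha> l (\<lambda>p. Poly_Mapping.lookup m (l, p)) [Suc l..<Suc n]"

function rows_from :: "'a::comm_ring_1 \<Rightarrow> 'a \<Rightarrow> nat \<Rightarrow> nat \<Rightarrow> ((nat \<times> nat) \<Rightarrow>\<^sub>0 nat) \<Rightarrow> 'a tpoly" where
  "rows_from \<beta> \<alpha> n l m = (if n < l then 1 else row_op \<beta> \<alpha> n l m (rows_from \<beta> \<alpha> n (Suc l) m))"
  by pat_completeness auto
termination
  by (relation "measure (\<lambda>(\<beta>, \<alpha>, n, l, m). Suc n - l)") auto

declare rows_from.simps [simp del]

lemma rows_from_le: "l \<le> n \<Longrightarrow> rows_from \<beta> \<alpha> n l m = row_op \<beta> \<alpha> n l m (rows_from \<beta> \<alpha> n (Suc l) m)"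
  by (subst rows_from.simps) simp

lemma rows_from_gt: "n < l \<Longrightarrow> rows_from \<beta> \<alpha> n l m = 1"
  by (subst rows_from.simps) simp

definition Fmono :: "'a::comm_ring_1 \<Rightarrow> 'a \<Rightarrow> nat \<Rightarrow> ((nat \<times> nat) \<Rightarrow>\<^sub>0 nat) \<Rightarrow> 'a tpoly" where
  "Fmono \<beta> \<alpha> n m = rows_from \<beta> \<alpha> n 1 m"

lemma row_op_jgen_comb:
  "row_op \<beta> \<alpha> n l m (jgen_comb \<beta> \<alpha> P Q R S U) =
    jgen_comb \<beta> \<alpha> (row_op \<beta> \<alpha> n l m P) (row_op \<beta> \<alpha> n l m Q) (row_op \<beta> \<alpha> n l m R)
      (row_op \<beta> \<alpha> n l m S) (row_op \<beta> \<alpha> n l m U)"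
  by (simp add: row_op_def jgen_comb_def Aop_chain_diff Aop_chain_tconst)

lemma row_op_0: "row_op \<beta> \<alpha> n l m 0 = 0"
  using Aop_chain_tconst[of l "[Suc l..<Suc n]" \<beta> \<alpha> _ 0 0] by (simp add: row_op_def)

lemma Aop_row_op_commute:
  assumes "a \<noteq> b" "a \<le> l" "l \<noteq> b"
  shows "Aop \<beta> \<alpha> a b (row_op \<beta> \<alpha> n l m G) = row_op \<beta> \<alpha> n l m (Aop \<beta> \<alpha> a b G)"
  unfolding row_op_def by (rule Aop_Aop_chain_commute) (use assms in auto)

lemma row_op_cong:
  "(\<And>p. Poly_Mapping.lookup m (l, p) = Poly_Mapping.lookup m' (l, p)) \<Longrightarrow> row_op \<beta> \<alpha> n l m = row_op \<beta> \<alpha> n l m'"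
  by (simp add: row_op_def)

lemma rows_from_cong:
  assumes "\<And>x y. l \<le> x \<Longrightarrow> Poly_Mapping.lookup m (x, y) = Poly_Mapping.lookup m' (x, y)"
  shows "rows_from \<beta> \<alpha> n l m = rows_from \<beta> \<alpha> n l m'"
  using assms
proof (induction "Suc n - l" arbitrary: l)
  case (Suc x)
  show ?case
  proof (cases "n < l")
    case False
    have "rows_from \<beta> \<alpha> n (Suc l) m = rows_from \<beta> \<alpha> n (Suc l) m'"
      using Suc by auto
    moreover have "row_op \<beta> \<alpha> n l m = row_op \<beta> \<alpha> n l m'"
      by (rule row_op_cong) (use Suc.prems in auto)
    ultimately show ?thesis
      using False by (simp add: rows_from_le)
  qed (simp add: rows_from_gt)
qed (simp add: rows_from_gt)

definition edge :: "nat \<Rightarrow> nat \<Rightarrow> (nat \<times> nat) \<Rightarrow>\<^sub>0 nat" where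
  "edge i j = Poly_Mapping.single (i, j) 1"

lemma lookup_edge: "Poly_Mapping.lookup (edge i j) v = (if v = (i, j) then 1 else 0)"
  by (simp add: edge_def lookup_single when_def)

lemma row_op_add_edge:
  assumes "l < q" "q \<le> n"
  shows "row_op \<beta> \<alpha> n l (m + edge l q) G = Aop \<beta> \<alpha> l q (row_op \<beta> \<alpha> n l m G)"
proof -
  have lookup: "(\<lambda>p. Poly_Mapping.lookup (m + edge l q) (l, p)) =
      (\<lambda>p. Poly_Mapping.lookup m (l, p))(q := Suc (Poly_Mapping.lookup m (l, q)))"
    by (auto simp: lookup_add lookup_edge)
  have "distinct [Suc l..<Suc n]" "q \<in> set [Suc l..<Suc n]" "l \<notin> set [Suc l..<Suc n]"
    using assms by auto
  then show ?thesis
    unfolding row_op_def lookup by (rule Aop_chain_Suc_exponent)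
qed

lemma row_op_add_edge_other: "x \<noteq> l \<Longrightarrow> row_op \<beta> \<alpha> n l (m + edge x y) = row_op \<beta> \<alpha> n l m"
  by (rule row_op_cong) (simp add: lookup_add lookup_edge)

lemma rows_from_add_edge_below: "x < l \<Longrightarrow> rows_from \<beta> \<alpha> n l (m + edge x y) = rows_from \<beta> \<alpha> n l m"
  by (rule rows_from_cong) (simp add: lookup_add lookup_edge)

section \<open>The functional respects the generators of \<open>J\<close>\<close>

lemma Aop_relation_rows_from:
  assumes ij: "i < j" and jk: "j < k" and kn: "k \<le> n"
  shows "i < l \<Longrightarrow> l \<le> j \<Longrightarrow>
    jgen_comb \<beta> \<alpha> (Aop \<beta> \<alpha> i j (rows_from \<beta> \<alpha> n l (m + edge j k)))
      (Aop \<beta> \<alpha> i k (Aop \<beta> \<alpha> i j (rows_from \<beta> \<alpha> n l m))) (Aop \<beta> \<alpha> i k (rows_from \<beta> \<alpha> n l (m + edge j k)))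
      (Aop \<beta> \<alpha> i k (rows_from \<beta> \<alpha> n l m)) (rows_from \<beta> \<alpha> n l m) = 0"
proof (induction "j - l" arbitrary: l)
  case 0
  have "l = j" "j \<le> n"
    using 0 jk kn by auto
  moreover have "rows_from \<beta> \<alpha> n j (m + edge j k) = Aop \<beta> \<alpha> j k (rows_from \<beta> \<alpha> n j m)"
    unfolding rows_from_le[OF \<open>j \<le> n\<close>]
    using jk kn by (simp add: row_op_add_edge rows_from_add_edge_below)
  ultimately show ?case
    using Aop_relation[of i j k] ij jk by simp
next
  case (Suc d)
  then have l: "l < j" "i < l" "l \<le> n"
    using jk kn by auto
  have IH: "jgen_comb \<beta> \<alpha> (Aop \<beta> \<alpha> i j (rows_from \<beta> \<alpha> n (Suc l) (m + edge j k)))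
      (Aop \<beta> \<alpha> i k (Aop \<beta> \<alpha> i j (rows_from \<beta> \<alpha> n (Suc l) m))) (Aop \<beta> \<alpha> i k (rows_from \<beta> \<alpha> n (Suc l) (m + edge j k)))
      (Aop \<beta> \<alpha> i k (rows_from \<beta> \<alpha> n (Suc l) m)) (rows_from \<beta> \<alpha> n (Suc l) m) = 0"
    using Suc l by simp
  have "Aop \<beta> \<alpha> i x (row_op \<beta> \<alpha> n l m G) = row_op \<beta> \<alpha> n l m (Aop \<beta> \<alpha> i x G)"
    if "x = j \<or> x = k" for x G
    by (rule Aop_row_op_commute) (use that l ij jk in auto)
  then show ?case
    using l IH
    by (simp add: rows_from_le[OF \<open>l \<le> n\<close>] row_op_add_edge_other row_op_jgen_comb[symmetric] row_op_0)
qed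

lemma rows_from_relation:
  assumes ij: "i < j" and jk: "j < k" and kn: "k \<le> n"
  shows "l \<le> i \<Longrightarrow>
    jgen_comb \<beta> \<alpha> (rows_from \<beta> \<alpha> n l (m + edge i j + edge j k)) (rows_from \<beta> \<alpha> n l (m + edge i k + edge i j))
      (rows_from \<beta> \<alpha> n l (m + edge i k + edge j k)) (rows_from \<beta> \<alpha> n l (m + edge i k)) (rows_from \<beta> \<alpha> n l m) = 0"
proof (induction "i - l" arbitrary: l)
  case 0
  then have "l = i"
    by simp
  have i: "i \<le> n" "j \<le> n" "i < k"
    using ij jk kn by auto
  have "Aop \<beta> \<alpha> i x (row_op \<beta> \<alpha> n i m G) = row_op \<beta> \<alpha> n i m (Aop \<beta> \<alpha> i x G)"
    if "x = j \<or> x = k" for x G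
    by (rule Aop_row_op_commute) (use that ij jk in auto)
  moreover have "m + edge i j + edge j k = m + edge j k + edge i j"
    "m + edge i k + edge i j = m + edge i j + edge i k"
    "m + edge i k + edge j k = m + edge j k + edge i k"
    by (simp_all add: add_ac)
  moreover have "jgen_comb \<beta> \<alpha> (Aop \<beta> \<alpha> i j (rows_from \<beta> \<alpha> n (Suc i) (m + edge j k)))
      (Aop \<beta> \<alpha> i k (Aop \<beta> \<alpha> i j (rows_from \<beta> \<alpha> n (Suc i) m))) (Aop \<beta> \<alpha> i k (rows_from \<beta> \<alpha> n (Suc i) (m + edge j k)))
      (Aop \<beta> \<alpha> i k (rows_from \<beta> \<alpha> n (Suc i) m)) (rows_from \<beta> \<alpha> n (Suc i) m) = 0"
    by (rule Aop_relation_rows_from[OF ij jk kn]) (use ij in auto)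
  ultimately show ?case
    using \<open>l = i\<close> i ij jk kn
    by (simp add: rows_from_le[OF \<open>i \<le> n\<close>] row_op_add_edge row_op_add_edge_other rows_from_add_edge_below
        row_op_jgen_comb[symmetric] row_op_0)
next
  case (Suc d)
  then have l: "l < i" "l \<le> n"
    using ij jk kn by auto
  then have "jgen_comb \<beta> \<alpha> (rows_from \<beta> \<alpha> n (Suc l) (m + edge i j + edge j k))
      (rows_from \<beta> \<alpha> n (Suc l) (m + edge i k + edge i j)) (rows_from \<beta> \<alpha> n (Suc l) (m + edge i k + edge j k))
      (rows_from \<beta> \<alpha> n (Suc l) (m + edge i k)) (rows_from \<beta> \<alpha> n (Suc l) m) = 0"
    using Suc by simp
  with l ij show ?case
    by (simp add: rows_from_le[OF \<open>l \<le> n\<close>] row_op_add_edge_other row_op_jgen_comb[symmetric] row_op_0)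
qed

lemma Fmono_relation:
  assumes "1 \<le> i" "i < j" "j < k" "k \<le> n"
  shows "jgen_comb \<beta> \<alpha> (Fmono \<beta> \<alpha> n (m + edge i j + edge j k)) (Fmono \<beta> \<alpha> n (m + edge i k + edge i j))
      (Fmono \<beta> \<alpha> n (m + edge i k + edge j k)) (Fmono \<beta> \<alpha> n (m + edge i k)) (Fmono \<beta> \<alpha> n m) = 0"
  unfolding Fmono_def using assms by (intro rows_from_relation) auto

definition Flin :: "'a::comm_ring_1 \<Rightarrow> 'a \<Rightarrow> nat \<Rightarrow> 'a xpoly \<Rightarrow> 'a tpoly" where
  "Flin \<beta> \<alpha> n = lin_ext (Fmono \<beta> \<alpha> n)"

lemma single_mult_Jgen:
  "Poly_Mapping.single m c * Jgen \<beta> \<alpha> i j k =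
     Poly_Mapping.single (m + edge i j + edge j k) c - Poly_Mapping.single (m + edge i k + edge i j) c
   - Poly_Mapping.single (m + edge i k + edge j k) c - Poly_Mapping.single (m + edge i k) (c * \<beta>)
   - Poly_Mapping.single m (c * \<alpha>)"
  by (simp add: Jgen_def xvar_def xconst_def edge_def right_diff_distrib distrib_left
      mult.assoc[symmetric] mult_single add_ac)

lemma Flin_single_mult_Jgen:
  assumes "1 \<le> i" "i < j" "j < k" "k \<le> n"
  shows "Flin \<beta> \<alpha> n (Poly_Mapping.single m c * Jgen \<beta> \<alpha> i j k) = 0"
proof -
  have "Flin \<beta> \<alpha> n (Poly_Mapping.single m c * Jgen \<beta> \<alpha> i j k) = tconst c *
      jgen_comb \<beta> \<alpha> (Fmono \<beta> \<alpha> n (m + edge i j + edge j k)) (Fmono \<beta> \<alpha> n (m + edge i k + edge i j))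
        (Fmono \<beta> \<alpha> n (m + edge i k + edge j k)) (Fmono \<beta> \<alpha> n (m + edge i k)) (Fmono \<beta> \<alpha> n m)"
    by (simp only: single_mult_Jgen Flin_def lin_ext_diff lin_ext_single)
      (simp add: jgen_comb_def tconst_mult algebra_simps)
  then show ?thesis
    by (simp only: Fmono_relation[OF assms] mult_zero_right)
qed

lemma Flin_mult_Jgen:
  assumes "1 \<le> i" "i < j" "j < k" "k \<le> n"
  shows "Flin \<beta> \<alpha> n (q * Jgen \<beta> \<alpha> i j k) = 0"
proof (induction q rule: poly_mapping_single_induct)
  case (single m c)
  show ?case
    by (rule Flin_single_mult_Jgen[OF assms])
qed (simp_all add: distrib_right Flin_def lin_ext_add)

lemma Flin_mult_Jideal:
  assumes "p \<in> Jideal n \<beta> \<alpha>"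
  shows "Flin \<beta> \<alpha> n (q * p) = 0"
  using assms
proof (induction arbitrary: q rule: Jideal.induct)
  case (gen i j k)
  then show ?case
    by (rule Flin_mult_Jgen)
next
  case (mult q' p)
  then show ?case
    by (metis mult.assoc)
qed (simp_all add: distrib_left Flin_def lin_ext_add)

section \<open>The functional on pathless monomials\<close>

definition row_degree :: "nat \<Rightarrow> ((nat \<times> nat) \<Rightarrow>\<^sub>0 nat) \<Rightarrow> nat \<Rightarrow> nat" where
  "row_degree n m x = (\<Sum>p\<in>{Suc x..n}. Poly_Mapping.lookup m (x, p))"

definition row_monomial :: "nat \<Rightarrow> ((nat \<times> nat) \<Rightarrow>\<^sub>0 nat) \<Rightarrow> nat \<Rightarrow> 'a::comm_ring_1 tpoly" where
  "row_monomial n m l = (\<Prod>x\<in>{l..n}. tvar x ^ row_degree n m x)"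

text \<open>If \<open>m(l,p) > 0\<close>, pathlessness forces row \<open>p\<close> of \<open>m\<close> to be empty, so \<open>t\<^sub>p\<close> does not occur in
  \<open>rows_from n (l + 1) m\<close> and \<open>A\<^sub>l\<^sub>,\<^sub>p\<close> acts on it as multiplication by \<open>t\<^sub>l\<close>.\<close>

lemma tsubst_row_monomial:
  assumes pl: "pathless_monomial n m" and l: "1 \<le> l" and p: "p \<in> {Suc l..n}"
    and nz: "Poly_Mapping.lookup m (l, p) \<noteq> 0"
  shows "tsubst p l (row_monomial n m (Suc l)) = (row_monomial n m (Suc l) :: 'a::comm_ring_1 tpoly)"
proof -
  have "row_degree n m p = 0"
  proof (rule ccontr)
    assume "row_degree n m p \<noteq> 0"
    then obtain y where "y \<in> {Suc p..n}" "Poly_Mapping.lookup m (p, y) \<noteq> 0"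
      unfolding row_degree_def by (meson sum.not_neutral_contains_not_neutral)
    with pl l p nz show False
      unfolding pathless_monomial_def by (metis Suc_le_eq atLeastAtMost_iff less_one linorder_not_le)
  qed
  then have "tsubst p l (tvar x ^ row_degree n m x) = (tvar x ^ row_degree n m x :: 'a tpoly)" for x
    by (cases "x = p") (simp_all add: tpoly_hom_1[OF tpoly_hom_tsubst] tpoly_hom_power[OF tpoly_hom_tsubst] tsubst_tvar_other)
  then show ?thesis
    unfolding row_monomial_def by (simp add: tsubst_prod)
qed

lemma rows_from_pathless:
  assumes pl: "pathless_monomial n m"
  shows "1 \<le> l \<Longrightarrow> rows_from \<beta> \<alpha> n l m = row_monomial n m l"
proof (induction "Suc n - l" arbitrary: l)
  case (Suc d)
  show ?case
  proof (cases "n < l")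
    case False
    then have "l \<le> n"
      by simp
    have "row_op \<beta> \<alpha> n l m (row_monomial n m (Suc l)) = tvar l ^ row_degree n m l * row_monomial n m (Suc l)"
    proof -
      have "sum_list (map (\<lambda>p. Poly_Mapping.lookup m (l, p)) [Suc l..<Suc n]) = row_degree n m l"
        by (simp only: interv_sum_list_conv_sum_set_nat set_upt atLeastLessThanSuc_atLeastAtMost row_degree_def)
      then show ?thesis
        unfolding row_op_def using tsubst_row_monomial[OF pl \<open>1 \<le> l\<close>]
        by (subst Aop_chain_fixed) auto
    qed
    moreover have "rows_from \<beta> \<alpha> n (Suc l) m = row_monomial n m (Suc l)"
      using Suc by auto
    ultimately show ?thesis
      using \<open>l \<le> n\<close> by (simp add: rows_from_le[OF \<open>l \<le> n\<close>] row_monomial_def prod.atLeast_Suc_atMost)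
  qed (simp add: rows_from_gt row_monomial_def)
qed (simp add: rows_from_gt row_monomial_def)

lemma Fmono_pathless:
  assumes pl: "pathless_monomial n m"
    and rng: "\<forall>v \<in> Poly_Mapping.keys m. 1 \<le> fst v \<and> fst v < snd v \<and> snd v \<le> n"
  shows "Fmono \<beta> \<alpha> n m = (\<Prod>v \<in> Poly_Mapping.keys m. tvar (fst v) ^ Poly_Mapping.lookup m v)"
proof -
  let ?R = "Sigma {1..n} (\<lambda>x. {Suc x..n})"
  have "Poly_Mapping.keys m \<subseteq> ?R"
    using rng by force
  then have "(\<Prod>v \<in> Poly_Mapping.keys m. tvar (fst v) ^ Poly_Mapping.lookup m v)
      = (\<Prod>v \<in> ?R. (tvar (fst v) ^ Poly_Mapping.lookup m v :: 'a tpoly))"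
    by (intro prod.mono_neutral_left) (auto simp: in_keys_iff)
  also have "\<dots> = (\<Prod>x\<in>{1..n}. \<Prod>p\<in>{Suc x..n}. tvar x ^ Poly_Mapping.lookup m (x, p))"
    by (subst prod.Sigma) (auto simp: case_prod_beta)
  also have "\<dots> = Fmono \<beta> \<alpha> n m"
    by (simp add: Fmono_def rows_from_pathless[OF pl] row_monomial_def row_degree_def power_sum)
  finally show ?thesis
    by simp
qed

lemma Dmap_eq_Flin:
  assumes "p \<in> Xring n" and "pathless n p"
  shows "Dmap p = Flin \<beta> \<alpha> n p"
  unfolding Dmap_def Flin_def lin_ext_def
  using assms by (intro sum.cong refl) (simp add: Fmono_pathless pathless_def Xring_def)

theorem lemma3p18:
  fixes \<beta> \<alpha> :: "'a::comm_ring_1" and n :: nat and p :: "'a xpoly"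
  assumes "n > 0"
    and "p \<in> Xring n"
    and "pathless n p"
    and "p \<in> Jideal n \<beta> \<alpha>"
  shows "Dmap p = 0"
proof -
  have "Dmap p = Flin \<beta> \<alpha> n (1 * p)"
    using Dmap_eq_Flin[OF assms(2,3)] by simp
  also have "\<dots> = 0"
    using assms(4) by (rule Flin_mult_Jideal)
  finally show ?thesis .
qed

end
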